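(* Let $\nu>0$, $\Delta t>0$, $\lambda>0$, and let $$\mu_\pm(\theta):=C_2(\Delta t)\cos\theta\pm i\sqrt{\big(C_2(\Delta t)\sin\theta\big)^2+\nu\,C_1(\Delta t)^2},\qquad \theta\in[-\pi,\pi],$$ and $\Sigma:=\{\mu_+(\theta):\theta\in[-\pi,\pi]\}\cup\{\mu_-(\theta):\theta\in[-\pi,\pi]\}\subset\mathbb C$. Then $\Sigma$ is an eigenvalue cluster for the sequence $\{T^{\mathrm{PS}}_N\}_{N\ge2}$: for every open set $\mathcal O\subset\mathbb C$ with $\Sigma\subset\mathcal O$, the number of eigenvalues of $T^{\mathrm{PS}}_N$ (counted with multiplicity) lying outside $\mathcal O$ is $o(N)$ as $N\to\infty$.
   Context: Fix $\nu>0$, $\Delta t>0$, $\lambda>0$ and set $\sigma:=\sqrt{\lambda^2+1/\nu}$. Define $$C_1(\Delta t):=\frac{-\nu^{-1}\sinh(\sigma\Delta t)}{\sigma\cosh(\sigma\Delta t)+\lambda\sinh(\sigma\Delta t)},\qquad C_2(\Delta t):=\frac{\sigma}{\sigma\cosh(\sigma\Delta t)+\lambda\sinh(\sigma\Delta t)}.$$ Define the $2\times 2$ blocks $$T_l:=\begin{pmatrix}0&0\\0&C_2(\Delta t)\end{pmatrix},\quad T_d:=\begin{pmatrix}0&C_1(\Delta t)\\-\nu C_1(\Delta t)&0\end{pmatrix},\quad T_r:=\begin{pmatrix}C_2(\Delta t)&0\\0&0\end{pmatrix}.$$ For an integer $N\ge 2$, $T^{\mathrm{PS}}_N\in\mathbb{R}^{2(N-1)\times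 2(N-1)}$ is the block tridiagonal block Toeplitz matrix with $N-1$ block rows whose diagonal blocks are $T_d$, superdiagonal blocks are $T_r$ and subdiagonal blocks are $T_l$. The set $\Sigma$ equals the spectrum of the associated bi-infinite block Laurent operator on $\ell^2(\mathbb Z,\mathbb C^2)$, i.e. the union over $\theta$ of the eigenvalues of the symbol $F(\theta)=T_r e^{-i\theta}+T_d+T_l e^{i\theta}$. *)

theory Defs
  imports Complex_Main "Jordan_Normal_Form.Char_Poly" "HOL-Library.Landau_Symbols"
begin

definition sigmaPS :: "real \<Rightarrow> real \<Rightarrow> real" where
  "sigmaPS \<nu> lam = sqrt (lam\<^sup>2 + 1 / \<nu>)"

definition C1 :: "real \<Rightarrow> real \<Rightarrow> real \<Rightarrow> real" where
  "C1 \<nu> lam dt = (let \<sigma> = sigmaPS \<nu> lam in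
     (- (1/\<nu>) * sinh (\<sigma> * dt)) / (\<sigma> * cosh (\<sigma> * dt) + lam * sinh (\<sigma> * dt)))"

definition C2 :: "real \<Rightarrow> real \<Rightarrow> real \<Rightarrow> real" where
  "C2 \<nu> lam dt = (let \<sigma> = sigmaPS \<nu> lam in
     \<sigma> / (\<sigma> * cosh (\<sigma> * dt) + lam * sinh (\<sigma> * dt)))"

definition Tl :: "real \<Rightarrow> real \<Rightarrow> real \<Rightarrow> nat \<Rightarrow> nat \<Rightarrow> real" where
  "Tl \<nu> lam dt a b = (if a = 1 \<and> b = 1 then C2 \<nu> lam dt else 0)"

definition Td :: "real \<Rightarrow> real \<Rightarrow> real \<Rightarrow> nat \<Rightarrow> nat \<Rightarrow> real" where
  "Td \<nu> lam dt a b = (if a = 0 \<and> b = 1 then C1 \<nu> lam dt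
                      else if a = 1 \<and> b = 0 then - \<nu> * C1 \<nu> lam dt else 0)"

definition Tr :: "real \<Rightarrow> real \<Rightarrow> real \<Rightarrow> nat \<Rightarrow> nat \<Rightarrow> real" where
  "Tr \<nu> lam dt a b = (if a = 0 \<and> b = 0 then C2 \<nu> lam dt else 0)"

definition TPS :: "real \<Rightarrow> real \<Rightarrow> real \<Rightarrow> nat \<Rightarrow> real mat" where
  "TPS \<nu> lam dt N = mat (2 * (N - 1)) (2 * (N - 1)) (\<lambda>(i, j).
     (let p = i div 2; a = i mod 2; q = j div 2; b = j mod 2 in
      if q = p then Td \<nu> lam dt a b
      else if q = p + 1 then Tr \<nu> lam dt a b
      else if p = q + 1 then Tl \<nu> lam dt a b
      else 0))"

definition mu_plus :: "real \<Rightarrow> real \<Rightarrow> real \<Rightarrow> real \<Rightarrow> complex" where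
  "mu_plus \<nu> lam dt \<theta> = complex_of_real (C2 \<nu> lam dt * cos \<theta>)
     + \<i> * complex_of_real (sqrt ((C2 \<nu> lam dt * sin \<theta>)\<^sup>2 + \<nu> * (C1 \<nu> lam dt)\<^sup>2))"

definition mu_minus :: "real \<Rightarrow> real \<Rightarrow> real \<Rightarrow> real \<Rightarrow> complex" where
  "mu_minus \<nu> lam dt \<theta> = complex_of_real (C2 \<nu> lam dt * cos \<theta>)
     - \<i> * complex_of_real (sqrt ((C2 \<nu> lam dt * sin \<theta>)\<^sup>2 + \<nu> * (C1 \<nu> lam dt)\<^sup>2))"

definition SigmaPS :: "real \<Rightarrow> real \<Rightarrow> real \<Rightarrow> complex set" where
  "SigmaPS \<nu> lam dt = mu_plus \<nu> lam dt ` {-pi..pi} \<union> mu_minus \<nu> lam dt ` {-pi..pi}"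

definition eig_count_outside :: "real mat \<Rightarrow> complex set \<Rightarrow> nat" where
  "eig_count_outside A U =
     (let p = char_poly (map_mat complex_of_real A) in
      \<Sum>z\<in>{z. poly p z = 0 \<and> z \<notin> U}. order z p)"

end

theory Submission
  imports Defs "HOL-Analysis.Analysis"
begin

text \<open>
  Write an eigenvector of T_N blockwise as (x_p, y_p), let n = N - 1, c = C_2, C = C_1, and
  let u be a root of c \<mu> (1 + u^2) = u (\<mu>^2 + c^2 + \<nu> C^2). Then (c - \<mu> u) x_p + C y_(p-1)
  is multiplied by u from one block to the next. The two roots are w and 1/w with |w| \<ge> 1,
  and comparing them at the last block gives w^n (c - \<mu> w) = w^-n (c - \<mu>/w). This bounds
  |w|^n by a constant, so w = (1 + O(1/n)) e^(i \<theta>), and \<mu> nearly solves the symbol equation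
  \<mu>^2 - 2 c cos \<theta> \<mu> + c^2 + \<nu> C^2 = 0 whose roots are \<mu>_+(\<theta>) and \<mu>_-(\<theta>). Hence every
  eigenvalue lies within O(N^(-1/2)) of \<Sigma>, and for large N none lies outside a given
  neighbourhood of \<Sigma>.
\<close>

lemma sum_indicator_mult:
  fixes f :: "nat \<Rightarrow> 'a::comm_semiring_1"
  shows "(\<Sum>j\<in>{0..<m}. (if j = k then \<alpha> else 0) * f j) = (if k < m then \<alpha> * f k else 0)"
proof -
  have "(\<Sum>j\<in>{0..<m}. (if j = k then \<alpha> else 0) * f j) = (\<Sum>j\<in>{0..<m}. if j = k then \<alpha> * f k else 0)"
    by (rule sum.cong) auto
  then show ?thesis by simp
qed

lemma map_mat_mult_vec_index:
  assumes "A \<in> carrier_mat m n" "v \<in> carrier_vec n" "i < m"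
  shows "(map_mat f A *\<^sub>v v) $ i = (\<Sum>j\<in>{0..<n}. f (A $$ (i, j)) * v $ j)"
  using assms by (simp add: scalar_prod_def)

lemma sq_le_or_sq_le_of_mult_le:
  fixes x y r :: real
  assumes "0 \<le> x" "0 \<le> y" "x * y \<le> r"
  shows "x\<^sup>2 \<le> r \<or> y\<^sup>2 \<le> r"
proof (cases "x \<le> y")
  case True
  with assms have "x\<^sup>2 \<le> x * y" by (simp add: power2_eq_square mult_left_mono)
  with assms show ?thesis by simp
next
  case False
  with assms have "y\<^sup>2 \<le> x * y" by (simp add: power2_eq_square mult_right_mono)
  with assms show ?thesis by simp
qed

lemma reciprocal_pair_with_sum:
  fixes s :: complex
  obtains w where "w \<noteq> 0" "w + inverse w = s" "1 \<le> cmod w"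
proof -
  define w1 where "w1 = (s + csqrt (s\<^sup>2 - 4)) / 2"
  define w2 where "w2 = (s - csqrt (s\<^sup>2 - 4)) / 2"
  have "w1 * w2 = (s\<^sup>2 - (csqrt (s\<^sup>2 - 4))\<^sup>2) / 4"
    by (simp add: w1_def w2_def algebra_simps power2_eq_square)
  then have prod: "w1 * w2 = 1"
    by simp
  have sum: "w1 + w2 = s"
    by (simp add: w1_def w2_def field_simps)
  have "1 \<le> cmod w1 \<or> 1 \<le> cmod w2"
  proof (rule ccontr)
    assume "\<not> ?thesis"
    then have "cmod w1 * cmod w2 < 1 * 1"
      by (intro mult_strict_mono) auto
    with prod show False
      by (simp add: norm_mult [symmetric])
  qed
  then show ?thesis
  proof (elim disjE)
    assume "1 \<le> cmod w1"
    with prod sum show ?thesis by (intro that [of w1]) (auto simp: inverse_unique)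
  next
    assume "1 \<le> cmod w2"
    with prod sum show ?thesis
      by (intro that [of w2]) (auto simp: inverse_unique mult.commute add.commute)
  qed
qed

lemma norm_add_inverse_sub_cos_Arg_le:
  fixes w :: complex
  assumes "1 \<le> cmod w"
  shows "cmod (w + inverse w - of_real (2 * cos (Arg w))) \<le> 2 * (cmod w - 1)"
proof -
  define \<rho> \<theta> where "\<rho> = cmod w" and "\<theta> = Arg w"
  have "\<rho> > 0" using assms unfolding \<rho>_def by linarith
  have w: "w = of_real \<rho> * cis \<theta>"
    using rcis_cmod_Arg [of w] by (simp add: rcis_def \<rho>_def \<theta>_def)
  then have "inverse w = of_real (1 / \<rho>) * cis (- \<theta>)"
    by (simp add: inverse_mult_distrib cis_inverse divide_inverse)
  moreover have "of_real (2 * cos \<theta>) = cis \<theta> + cis (- \<theta>)"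
    by (simp add: complex_eq_iff)
  ultimately have "w + inverse w - of_real (2 * cos \<theta>)
      = of_real (\<rho> - 1) * cis \<theta> + of_real (1 / \<rho> - 1) * cis (- \<theta>)"
    by (simp add: w algebra_simps)
  also have "cmod \<dots> \<le> \<bar>\<rho> - 1\<bar> + \<bar>1 / \<rho> - 1\<bar>"
    by (rule norm_triangle_le) (simp only: norm_mult norm_of_real norm_cis mult_1_right order_refl)
  also have "\<dots> = (\<rho> - 1) + (\<rho> - 1) / \<rho>"
    using assms \<open>\<rho> > 0\<close> by (simp add: \<rho>_def field_simps)
  also have "\<dots> \<le> 2 * (\<rho> - 1)"
  proof -
    have "(\<rho> - 1) * 1 \<le> (\<rho> - 1) * \<rho>"
      using assms by (intro mult_left_mono) (auto simp: \<rho>_def)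
    then have "(\<rho> - 1) / \<rho> \<le> \<rho> - 1"
      by (simp add: pos_divide_le_eq [OF \<open>\<rho> > 0\<close>])
    then show ?thesis
      unfolding mult_2 by (rule add_left_mono)
  qed
  finally show ?thesis by (simp add: \<rho>_def \<theta>_def)
qed

lemma reciprocal_boundary_norms:
  fixes \<mu> w :: complex and c a :: real
  assumes "0 < a" "1 \<le> cmod w"
    and sum: "of_real c * \<mu> * (w + inverse w) = \<mu>\<^sup>2 + of_real (c\<^sup>2 + a\<^sup>2)"
    and boundary: "w ^ n * (of_real c - \<mu> * w) = inverse w ^ n * (of_real c - \<mu> * inverse w)"
  shows "cmod (\<mu> * w - of_real c) * cmod w ^ n = a"
    and "cmod (of_real c - \<mu> * inverse w) = a * cmod w ^ n"
proof -
  define \<eta> where "\<eta> = \<mu> * w - of_real c"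
  have "w \<noteq> 0"
    using assms by auto
  have "\<eta> * (of_real c - \<mu> * inverse w)
      = of_real c * \<mu> * (w + inverse w) - \<mu>\<^sup>2 * (w * inverse w) - of_real (c\<^sup>2)"
    by (simp add: \<eta>_def algebra_simps power2_eq_square)
  also have "\<dots> = of_real (a\<^sup>2)"
    using \<open>w \<noteq> 0\<close> by (simp add: sum)
  finally have "cmod \<eta> * cmod (of_real c - \<mu> * inverse w) = a\<^sup>2"
    by (metis norm_mult norm_of_real abs_power2)
  moreover have "- \<eta> * w ^ (2 * n) = of_real c - \<mu> * inverse w"
  proof -
    have "- \<eta> * w ^ (2 * n) = w ^ n * (w ^ n * (of_real c - \<mu> * w))"
      unfolding mult_2 power_add by (simp add: \<eta>_def algebra_simps)
    also have "\<dots> = (w * inverse w) ^ n * (of_real c - \<mu> * inverse w)"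
      by (simp add: boundary power_mult_distrib)
    finally show ?thesis using \<open>w \<noteq> 0\<close> by simp
  qed
  then have \<eta>_rel: "cmod (of_real c - \<mu> * inverse w) = cmod \<eta> * cmod w ^ n * cmod w ^ n"
    by (metis mult_2 norm_minus_cancel norm_mult norm_power power_add mult.assoc)
  ultimately have "(cmod \<eta> * cmod w ^ n)\<^sup>2 = a\<^sup>2"
    by (simp add: power2_eq_square algebra_simps)
  then show \<eta>_w: "cmod \<eta> * cmod w ^ n = a"
    using \<open>0 < a\<close> by (simp add: power2_eq_iff_nonneg)
  show "cmod (of_real c - \<mu> * inverse w) = a * cmod w ^ n"
    by (simp add: \<eta>_rel \<eta>_w [symmetric])
qed

lemma reciprocal_boundary_bound:
  fixes \<mu> w :: complex and c a :: real
  assumes "0 < c" "0 < a" "1 \<le> cmod w"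
    and sum: "of_real c * \<mu> * (w + inverse w) = \<mu>\<^sup>2 + of_real (c\<^sup>2 + a\<^sup>2)"
    and boundary: "w ^ n * (of_real c - \<mu> * w) = inverse w ^ n * (of_real c - \<mu> * inverse w)"
  shows "cmod w ^ n \<le> 1 + 2 * c / a \<and> cmod \<mu> \<le> c + a"
proof -
  define \<rho> where "\<rho> = cmod w"
  note norms = reciprocal_boundary_norms [OF \<open>0 < a\<close> \<open>1 \<le> cmod w\<close> sum boundary, folded \<rho>_def]
  have "\<rho> \<ge> 1" "\<rho> ^ n \<ge> 1"
    using assms by (auto simp: \<rho>_def)
  then have "cmod (\<mu> * w - of_real c) \<le> a"
    using norms(1) by (metis mult_cancel_left1 mult_left_mono norm_ge_zero)
  have "cmod \<mu> \<le> cmod \<mu> * \<rho>"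
    using \<open>\<rho> \<ge> 1\<close> by (simp add: mult_le_cancel_left1)
  also have "\<dots> = cmod ((\<mu> * w - of_real c) + of_real c)"
    by (simp add: \<rho>_def norm_mult)
  also have "\<dots> \<le> a + c"
    using norm_triangle_ineq [of "\<mu> * w - of_real c" "of_real c"] \<open>cmod (\<mu> * w - of_real c) \<le> a\<close> \<open>0 < c\<close>
    by simp
  finally have \<mu>_le: "cmod \<mu> \<le> c + a" by simp
  have "a * \<rho> ^ n \<le> c + cmod \<mu> / \<rho>"
    using norms(2) norm_triangle_ineq4 [of "of_real c" "\<mu> * inverse w"] \<open>0 < c\<close>
    by (simp add: \<rho>_def norm_mult norm_inverse divide_inverse)
  also have "\<dots> \<le> c + cmod \<mu>"
    using \<open>\<rho> \<ge> 1\<close> by (simp add: divide_le_eq mult_le_cancel_left1)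
  also have "\<dots> \<le> c + (c + a)"
    using \<mu>_le by simp
  finally have "\<rho> ^ n \<le> 1 + 2 * c / a"
    using \<open>0 < a\<close> by (simp add: field_simps)
  with \<mu>_le show ?thesis by (simp add: \<rho>_def)
qed

text \<open>
  \<open>X p\<close> and \<open>Y (Suc p)\<close> are the two components of block \<open>p\<close> of an eigenvector for
  the eigenvalue \<open>\<mu>\<close>, padded by \<open>X n = 0\<close> and \<open>Y 0 = 0\<close>; the two equations are
  the even and the odd rows of the eigen-equation.
\<close>
definition eigen_recurrence ::
    "complex \<Rightarrow> complex \<Rightarrow> complex \<Rightarrow> complex \<Rightarrow> nat \<Rightarrow> (nat \<Rightarrow> complex) \<Rightarrow> (nat \<Rightarrow> complex) \<Rightarrow> bool"
  where "eigen_recurrence c C \<nu> \<mu> n X Y \<longleftrightarrow> X n = 0 \<and> Y 0 = 0 \<and>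
    (\<forall>p<n. c * X (Suc p) = \<mu> * X p - C * Y (Suc p) \<and> \<mu> * Y (Suc p) = c * Y p - \<nu> * C * X p)"

lemma eigen_recurrence_transfer:
  assumes rec: "eigen_recurrence c C \<nu> \<mu> n X Y" and "c \<noteq> 0"
    and root: "u * (\<mu>\<^sup>2 + c\<^sup>2 + \<nu> * C\<^sup>2) = c * \<mu> * (1 + u\<^sup>2)"
  shows "p \<le> n \<Longrightarrow> (c - \<mu> * u) * X p + C * Y p = u ^ p * ((c - \<mu> * u) * X 0)"
proof (induction p)
  case 0
  show ?case using rec by (simp add: eigen_recurrence_def)
next
  case (Suc p)
  then have "p < n" by simp
  with rec have e1: "c * X (Suc p) = \<mu> * X p - C * Y (Suc p)"
    and e2: "\<mu> * Y (Suc p) = c * Y p - \<nu> * C * X p"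
    by (auto simp: eigen_recurrence_def)
  have "c * ((c - \<mu> * u) * X (Suc p) + C * Y (Suc p))
      = (c - \<mu> * u) * (c * X (Suc p)) + c * C * Y (Suc p)"
    by (simp add: algebra_simps)
  also have "\<dots> = (c - \<mu> * u) * \<mu> * X p + u * C * (\<mu> * Y (Suc p))"
    unfolding e1 by (simp add: algebra_simps)
  also have "\<dots> = X p * (c * \<mu> * (1 + u\<^sup>2) - u * (\<mu>\<^sup>2 + c\<^sup>2 + \<nu> * C\<^sup>2))
      + c * (u * ((c - \<mu> * u) * X p + C * Y p))"
    unfolding e2 by (simp add: algebra_simps power2_eq_square)
  finally have "(c - \<mu> * u) * X (Suc p) + C * Y (Suc p) = u * ((c - \<mu> * u) * X p + C * Y p)"
    using \<open>c \<noteq> 0\<close> by (simp add: root)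
  with Suc show ?case by simp
qed

lemma eigen_recurrence_eigenvalue_nonzero:
  assumes rec: "eigen_recurrence c C \<nu> \<mu> n X Y"
    and "C \<noteq> 0" "\<nu> \<noteq> 0" "c\<^sup>2 + \<nu> * C\<^sup>2 \<noteq> 0"
    and nontrivial: "\<exists>p\<le>n. X p \<noteq> 0 \<or> Y p \<noteq> 0"
  shows "\<mu> \<noteq> 0"
proof
  assume "\<mu> = 0"
  with rec have X_n: "X n = 0" and Y_0: "Y 0 = 0"
    and e1: "\<And>p. p < n \<Longrightarrow> c * X (Suc p) + C * Y (Suc p) = 0"
    and e2: "\<And>p. p < n \<Longrightarrow> c * Y p = \<nu> * C * X p"
    by (auto simp: eigen_recurrence_def)
  have X_zero: "X p = 0" if "p \<le> n" for p
  proof (cases "p < n")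
    case True
    show ?thesis
    proof (cases p)
      case 0
      then show ?thesis using e2 [OF True] Y_0 \<open>C \<noteq> 0\<close> \<open>\<nu> \<noteq> 0\<close> by simp
    next
      case (Suc q)
      have "(c\<^sup>2 + \<nu> * C\<^sup>2) * X p = c * (c * X p + C * Y p) - C * (c * Y p - \<nu> * C * X p)"
        by (simp add: algebra_simps power2_eq_square)
      also have "\<dots> = 0" using e1 [of q] e2 [OF True] Suc True by simp
      finally show ?thesis using \<open>c\<^sup>2 + \<nu> * C\<^sup>2 \<noteq> 0\<close> by simp
    qed
  next
    case False
    with that X_n show ?thesis by simp
  qed
  have "Y p = 0" if "p \<le> n" for p
  proof (cases p)
    case (Suc q)
    with that e1 [of q] X_zero [OF that] \<open>C \<noteq> 0\<close> show ?thesis by simp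
  qed (use Y_0 in simp)
  with X_zero nontrivial show False by blast
qed

lemma eigen_recurrence_start_nonzero:
  assumes rec: "eigen_recurrence c C \<nu> \<mu> n X Y" and "c \<noteq> 0" "\<mu> \<noteq> 0"
    and nontrivial: "\<exists>p\<le>n. X p \<noteq> 0 \<or> Y p \<noteq> 0"
  shows "X 0 \<noteq> 0"
proof
  assume "X 0 = 0"
  have "X p = 0 \<and> Y p = 0" if "p \<le> n" for p
    using that
  proof (induction p)
    case 0
    with \<open>X 0 = 0\<close> rec show ?case by (simp add: eigen_recurrence_def)
  next
    case (Suc p)
    with rec have "c * X (Suc p) = \<mu> * X p - C * Y (Suc p)"
      and "\<mu> * Y (Suc p) = c * Y p - \<nu> * C * X p"
      by (auto simp: eigen_recurrence_def)
    with Suc \<open>c \<noteq> 0\<close> \<open>\<mu> \<noteq> 0\<close> show ?case by simp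
  qed
  with nontrivial show False by blast
qed

lemma eigen_recurrence_boundary_root:
  fixes c C \<nu> :: real and \<mu> :: complex
  assumes "0 < c" "C \<noteq> 0" "0 < \<nu>"
    and rec: "eigen_recurrence (of_real c) (of_real C) (of_real \<nu>) \<mu> n X Y"
    and nontrivial: "\<exists>p\<le>n. X p \<noteq> 0 \<or> Y p \<noteq> 0"
  obtains w where "1 \<le> cmod w"
    and "of_real c * \<mu> * (w + inverse w) = \<mu>\<^sup>2 + of_real (c\<^sup>2 + \<nu> * C\<^sup>2)"
    and "w ^ n * (of_real c - \<mu> * w) = inverse w ^ n * (of_real c - \<mu> * inverse w)"
proof -
  have "\<mu> \<noteq> 0"
  proof (rule eigen_recurrence_eigenvalue_nonzero [OF rec _ _ _ nontrivial])
    have "0 < c\<^sup>2 + \<nu> * C\<^sup>2"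
      using assms by (simp add: add_pos_nonneg)
    then show "(of_real c)\<^sup>2 + of_real \<nu> * (of_real C)\<^sup>2 \<noteq> (0::complex)"
      by (metis of_real_add of_real_eq_0_iff of_real_mult of_real_power less_irrefl)
  qed (use assms in auto)
  then have "X 0 \<noteq> 0"
    using eigen_recurrence_start_nonzero [OF rec _ _ nontrivial] \<open>0 < c\<close> by simp
  define s where "s = (\<mu>\<^sup>2 + of_real (c\<^sup>2 + \<nu> * C\<^sup>2)) / (of_real c * \<mu>)"
  obtain w where "w \<noteq> 0" "w + inverse w = s" "1 \<le> cmod w"
    using reciprocal_pair_with_sum .
  have sum: "of_real c * \<mu> * (w + inverse w) = \<mu>\<^sup>2 + of_real (c\<^sup>2 + \<nu> * C\<^sup>2)"
    using \<open>w + inverse w = s\<close> \<open>\<mu> \<noteq> 0\<close> \<open>0 < c\<close> by (simp add: s_def)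
  have boundary: "of_real C * Y n = u ^ n * ((of_real c - \<mu> * u) * X 0)"
    if "u \<noteq> 0" "u + inverse u = w + inverse w" for u
  proof -
    have "u * (\<mu>\<^sup>2 + of_real (c\<^sup>2 + \<nu> * C\<^sup>2)) = u * (of_real c * \<mu> * (u + inverse u))"
      by (simp only: sum that(2))
    also have "\<dots> = of_real c * \<mu> * (1 + u\<^sup>2)"
      using \<open>u \<noteq> 0\<close> by (simp add: algebra_simps power2_eq_square)
    finally have "u * (\<mu>\<^sup>2 + (of_real c)\<^sup>2 + of_real \<nu> * (of_real C)\<^sup>2) = of_real c * \<mu> * (1 + u\<^sup>2)"
      by (simp add: add.assoc)
    from eigen_recurrence_transfer [OF rec _ this order_refl] rec \<open>0 < c\<close>
    show ?thesis by (simp add: eigen_recurrence_def)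
  qed
  have "w ^ n * (of_real c - \<mu> * w) = inverse w ^ n * (of_real c - \<mu> * inverse w)"
    using boundary [of w] boundary [of "inverse w"] \<open>w \<noteq> 0\<close> \<open>X 0 \<noteq> 0\<close>
    by (simp add: add.commute)
  with \<open>1 \<le> cmod w\<close> sum show ?thesis
    by (rule that)
qed

lemma eigen_recurrence_near_symbol:
  fixes c C \<nu> :: real and \<mu> :: complex
  assumes "0 < c" "C \<noteq> 0" "0 < \<nu>"
    and rec: "eigen_recurrence (of_real c) (of_real C) (of_real \<nu>) \<mu> n X Y"
    and nontrivial: "\<exists>p\<le>n. X p \<noteq> 0 \<or> Y p \<noteq> 0"
  shows "\<exists>\<theta>\<in>{-pi..pi}. cmod (\<mu>\<^sup>2 - of_real (2 * c * cos \<theta>) * \<mu> + of_real (c\<^sup>2 + \<nu> * C\<^sup>2))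
    \<le> 4 * c\<^sup>2 * (c + sqrt \<nu> * \<bar>C\<bar>) / (sqrt \<nu> * \<bar>C\<bar> * real n)"
proof -
  define a where "a = sqrt \<nu> * \<bar>C\<bar>"
  have "0 < a" "a\<^sup>2 = \<nu> * C\<^sup>2"
    using assms by (auto simp: a_def power_mult_distrib)
  have "n > 0"
    using rec nontrivial by (auto simp: eigen_recurrence_def intro!: gr0I)
  obtain w where "1 \<le> cmod w"
    and sum: "of_real c * \<mu> * (w + inverse w) = \<mu>\<^sup>2 + of_real (c\<^sup>2 + a\<^sup>2)"
    and boundary: "w ^ n * (of_real c - \<mu> * w) = inverse w ^ n * (of_real c - \<mu> * inverse w)"
    using eigen_recurrence_boundary_root [OF assms] \<open>a\<^sup>2 = \<nu> * C\<^sup>2\<close> by metis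
  from reciprocal_boundary_bound [OF \<open>0 < c\<close> \<open>0 < a\<close> \<open>1 \<le> cmod w\<close> sum boundary]
  have power_bound: "cmod w ^ n \<le> 1 + 2 * c / a" and \<mu>_bound: "cmod \<mu> \<le> c + a"
    by auto
  have "1 + real n * (cmod w - 1) \<le> cmod w ^ n"
    using Bernoulli_inequality [of "cmod w - 1" n] \<open>1 \<le> cmod w\<close> by simp
  with power_bound have "real n * (cmod w - 1) \<le> 2 * c / a"
    by linarith
  with \<open>n > 0\<close> have radius_bound: "cmod w - 1 \<le> 2 * c / a / real n"
    by (subst pos_le_divide_eq) (simp_all add: mult.commute)
  define \<theta> where "\<theta> = Arg w"
  have "\<theta> \<in> {-pi..pi}"
    using Arg_bounded [of w] by (auto simp: \<theta>_def)
  have "\<mu>\<^sup>2 - of_real (2 * c * cos \<theta>) * \<mu> + of_real (c\<^sup>2 + \<nu> * C\<^sup>2)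
      = (\<mu>\<^sup>2 + of_real (c\<^sup>2 + a\<^sup>2)) - of_real (2 * c * cos \<theta>) * \<mu>"
    by (simp add: \<open>a\<^sup>2 = \<nu> * C\<^sup>2\<close>)
  also have "\<dots> = of_real c * \<mu> * (w + inverse w - of_real (2 * cos \<theta>))"
    unfolding sum [symmetric] by (simp add: algebra_simps)
  finally have "cmod (\<mu>\<^sup>2 - of_real (2 * c * cos \<theta>) * \<mu> + of_real (c\<^sup>2 + \<nu> * C\<^sup>2))
      = c * (cmod \<mu> * cmod (w + inverse w - of_real (2 * cos \<theta>)))"
    using \<open>0 < c\<close> by (simp add: norm_mult)
  also have "\<dots> \<le> c * ((c + a) * (2 * (2 * c / a / real n)))"
  proof -
    have "cmod (w + inverse w - of_real (2 * cos \<theta>)) \<le> 2 * (2 * c / a / real n)"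
      using norm_add_inverse_sub_cos_Arg_le [OF \<open>1 \<le> cmod w\<close>] radius_bound
      by (simp add: \<theta>_def)
    with \<mu>_bound \<open>0 < c\<close> \<open>0 < a\<close> show ?thesis
      by (intro mult_left_mono mult_mono) auto
  qed
  also have "\<dots> = 4 * c\<^sup>2 * (c + a) / (a * real n)"
    by (simp add: power2_eq_square)
  finally show ?thesis
    using \<open>\<theta> \<in> {-pi..pi}\<close> by (auto simp: a_def)
qed

lemma C2_pos_C1_neg:
  assumes "0 < \<nu>" "0 < dt" "0 < lam"
  shows "0 < C2 \<nu> lam dt" "C1 \<nu> lam dt < 0"
proof -
  define \<sigma> where "\<sigma> = sigmaPS \<nu> lam"
  have "0 < \<sigma>"
    using assms by (simp add: \<sigma>_def sigmaPS_def add_nonneg_pos)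
  with assms have "0 < sinh (\<sigma> * dt)" "0 < \<sigma> * cosh (\<sigma> * dt) + lam * sinh (\<sigma> * dt)"
    by (simp_all add: add_pos_pos)
  with \<open>0 < \<sigma>\<close> \<open>0 < \<nu>\<close> show "0 < C2 \<nu> lam dt" "C1 \<nu> lam dt < 0"
    by (simp_all add: C1_def C2_def Let_def \<sigma>_def [symmetric] divide_neg_pos)
qed

lemma TPS_carrier: "TPS \<nu> lam dt N \<in> carrier_mat (2 * (N - 1)) (2 * (N - 1))"
  by (simp add: TPS_def)

lemma TPS_index_even:
  assumes "p < N - 1" "j < 2 * (N - 1)"
  shows "TPS \<nu> lam dt N $$ (2 * p, j)
    = (if j = 2 * p + 1 then C1 \<nu> lam dt else 0) + (if j = 2 * p + 2 then C2 \<nu> lam dt else 0)"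
  using assms by (auto simp: TPS_def Let_def Td_def Tr_def Tl_def) presburger+

lemma TPS_index_odd:
  assumes "p < N - 1" "j < 2 * (N - 1)"
  shows "TPS \<nu> lam dt N $$ (Suc (2 * p), j)
    = (if j = 2 * p then - \<nu> * C1 \<nu> lam dt else 0) + (if p \<noteq> 0 \<and> j = 2 * p - 1 then C2 \<nu> lam dt else 0)"
  using assms by (auto simp: TPS_def Let_def Td_def Tr_def Tl_def) presburger+

lemma TPS_mult_vec_even:
  fixes v :: "complex Matrix.vec"
  assumes "v \<in> carrier_vec (2 * (N - 1))" "p < N - 1"
  shows "(map_mat of_real (TPS \<nu> lam dt N) *\<^sub>v v) $ (2 * p)
    = of_real (C1 \<nu> lam dt) * v $ (2 * p + 1)
      + (if Suc p < N - 1 then of_real (C2 \<nu> lam dt) * v $ (2 * p + 2) else 0)"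
proof -
  have "(map_mat of_real (TPS \<nu> lam dt N) *\<^sub>v v) $ (2 * p)
      = (\<Sum>j\<in>{0..<2 * (N - 1)}. ((if j = 2 * p + 1 then of_real (C1 \<nu> lam dt) else 0)
          + (if j = 2 * p + 2 then of_real (C2 \<nu> lam dt) else 0)) * v $ j)"
    using assms
    by (simp add: map_mat_mult_vec_index [OF TPS_carrier]) (auto intro!: sum.cong simp: TPS_index_even)
  also have "\<dots> = of_real (C1 \<nu> lam dt) * v $ (2 * p + 1)
      + (if Suc p < N - 1 then of_real (C2 \<nu> lam dt) * v $ (2 * p + 2) else 0)"
    using assms by (simp add: distrib_right sum.distrib sum_indicator_mult)
  finally show ?thesis .
qed

lemma TPS_mult_vec_odd:
  fixes v :: "complex Matrix.vec"
  assumes "v \<in> carrier_vec (2 * (N - 1))" "p < N - 1"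
  shows "(map_mat of_real (TPS \<nu> lam dt N) *\<^sub>v v) $ Suc (2 * p)
    = (if p = 0 then 0 else of_real (C2 \<nu> lam dt) * v $ (2 * p - 1))
      - of_real (\<nu> * C1 \<nu> lam dt) * v $ (2 * p)"
proof -
  have "(map_mat of_real (TPS \<nu> lam dt N) *\<^sub>v v) $ Suc (2 * p)
      = (\<Sum>j\<in>{0..<2 * (N - 1)}. ((if j = 2 * p then of_real (- \<nu> * C1 \<nu> lam dt) else 0)
          + (if p \<noteq> 0 \<and> j = 2 * p - 1 then of_real (C2 \<nu> lam dt) else 0)) * v $ j)"
    using assms
    by (simp add: map_mat_mult_vec_index [OF TPS_carrier]) (auto intro!: sum.cong simp: TPS_index_odd)
  also have "\<dots> = (if p = 0 then 0 else of_real (C2 \<nu> lam dt) * v $ (2 * p - 1))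
      - of_real (\<nu> * C1 \<nu> lam dt) * v $ (2 * p)"
    using assms by (cases "p = 0") (simp_all add: distrib_right sum.distrib sum_indicator_mult)
  finally show ?thesis .
qed

lemma TPS_eigenvalue_recurrence:
  assumes "poly (char_poly (map_mat complex_of_real (TPS \<nu> lam dt N))) \<mu> = 0"
  obtains X Y
  where "eigen_recurrence (of_real (C2 \<nu> lam dt)) (of_real (C1 \<nu> lam dt)) (of_real \<nu>) \<mu> (N - 1) X Y"
    and "\<exists>p\<le>N - 1. X p \<noteq> 0 \<or> Y p \<noteq> 0"
proof -
  define n where "n = N - 1"
  define T where "T = map_mat complex_of_real (TPS \<nu> lam dt N)"
  have T: "T \<in> carrier_mat (2 * n) (2 * n)"
    using TPS_carrier by (simp add: T_def n_def)
  with assms have "eigenvalue T \<mu>"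
    by (simp add: eigenvalue_root_char_poly T_def)
  with T obtain v where v: "v \<in> carrier_vec (2 * n)" "v \<noteq> 0\<^sub>v (2 * n)" "T *\<^sub>v v = \<mu> \<cdot>\<^sub>v v"
    by (auto simp: eigenvalue_def eigenvector_def)
  define X where "X p = (if p < n then v $ (2 * p) else 0)" for p
  define Y where "Y p = (if p = 0 then 0 else v $ (2 * p - 1))" for p
  have "eigen_recurrence (of_real (C2 \<nu> lam dt)) (of_real (C1 \<nu> lam dt)) (of_real \<nu>) \<mu> n X Y"
    unfolding eigen_recurrence_def
  proof (intro conjI allI impI)
    fix p assume "p < n"
    then have "\<mu> * v $ (2 * p) = (T *\<^sub>v v) $ (2 * p)" "\<mu> * v $ (2 * p + 1) = (T *\<^sub>v v) $ (2 * p + 1)"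
      using v by simp_all
    with \<open>p < n\<close> v(1) show "of_real (C2 \<nu> lam dt) * X (Suc p) = \<mu> * X p - of_real (C1 \<nu> lam dt) * Y (Suc p)"
      and "\<mu> * Y (Suc p) = of_real (C2 \<nu> lam dt) * Y p - of_real \<nu> * of_real (C1 \<nu> lam dt) * X p"
      by (simp_all add: X_def Y_def T_def n_def TPS_mult_vec_even TPS_mult_vec_odd)
  qed (simp_all add: X_def Y_def)
  moreover have "\<exists>p\<le>n. X p \<noteq> 0 \<or> Y p \<noteq> 0"
  proof -
    obtain i where "i < 2 * n" "v $ i \<noteq> 0"
      using v(1,2) by (metis carrier_vecD eq_vecI index_zero_vec(1,2))
    show ?thesis
    proof (cases "even i")
      case True
      with \<open>i < 2 * n\<close> \<open>v $ i \<noteq> 0\<close> have "X (i div 2) \<noteq> 0" "i div 2 \<le> n"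
        by (auto simp: X_def)
      then show ?thesis by blast
    next
      case False
      with \<open>i < 2 * n\<close> \<open>v $ i \<noteq> 0\<close> have "Y (Suc (i div 2)) \<noteq> 0" "Suc (i div 2) \<le> n"
        by (auto simp: Y_def elim: oddE)
      then show ?thesis by blast
    qed
  qed
  ultimately show ?thesis
    using that by (simp add: n_def)
qed

lemma mu_plus_mu_minus_product:
  assumes "0 \<le> \<nu>"
  shows "(z - mu_plus \<nu> lam dt \<theta>) * (z - mu_minus \<nu> lam dt \<theta>)
    = z\<^sup>2 - of_real (2 * C2 \<nu> lam dt * cos \<theta>) * z + of_real ((C2 \<nu> lam dt)\<^sup>2 + \<nu> * (C1 \<nu> lam dt)\<^sup>2)"
proof -
  define c C S where "c = C2 \<nu> lam dt" and "C = C1 \<nu> lam dt"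
    and "S = sqrt ((c * sin \<theta>)\<^sup>2 + \<nu> * C\<^sup>2)"
  have "S\<^sup>2 = (c * sin \<theta>)\<^sup>2 + \<nu> * C\<^sup>2"
    using assms by (simp add: S_def)
  then have "(c * cos \<theta>)\<^sup>2 + S\<^sup>2 = c\<^sup>2 + \<nu> * C\<^sup>2"
    by (simp add: power_mult_distrib algebra_simps flip: distrib_left)
  moreover have "(z - (of_real (c * cos \<theta>) + \<i> * of_real S)) * (z - (of_real (c * cos \<theta>) - \<i> * of_real S))
      = z\<^sup>2 - of_real (2 * c * cos \<theta>) * z + of_real ((c * cos \<theta>)\<^sup>2 + S\<^sup>2)"
    by (simp add: algebra_simps power2_eq_square)
  ultimately show ?thesis
    by (simp add: mu_plus_def mu_minus_def c_def C_def S_def)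
qed

lemma compact_SigmaPS: "compact (SigmaPS \<nu> lam dt)"
  unfolding SigmaPS_def mu_plus_def mu_minus_def
  by (intro compact_Un compact_continuous_image continuous_intros compact_Icc)

lemma TPS_eigenvalues_near_SigmaPS:
  assumes "0 < \<nu>" "0 < dt" "0 < lam"
  obtains K where "\<And>N \<mu>. poly (char_poly (map_mat complex_of_real (TPS \<nu> lam dt N))) \<mu> = 0 \<Longrightarrow>
    \<exists>\<sigma>\<in>SigmaPS \<nu> lam dt. (cmod (\<mu> - \<sigma>))\<^sup>2 \<le> K / real (N - 1)"
proof
  define c C where "c = C2 \<nu> lam dt" and "C = C1 \<nu> lam dt"
  have "0 < c" "C \<noteq> 0"
    using C2_pos_C1_neg [OF assms] by (auto simp: c_def C_def)
  fix N \<mu>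
  assume "poly (char_poly (map_mat complex_of_real (TPS \<nu> lam dt N))) \<mu> = 0"
  then obtain X Y where rec: "eigen_recurrence (of_real c) (of_real C) (of_real \<nu>) \<mu> (N - 1) X Y"
    and nontrivial: "\<exists>p\<le>N - 1. X p \<noteq> 0 \<or> Y p \<noteq> 0"
    by (rule TPS_eigenvalue_recurrence) (simp add: c_def C_def)
  obtain \<theta> where "\<theta> \<in> {-pi..pi}"
    and bound: "cmod (\<mu>\<^sup>2 - of_real (2 * c * cos \<theta>) * \<mu> + of_real (c\<^sup>2 + \<nu> * C\<^sup>2))
      \<le> 4 * c\<^sup>2 * (c + sqrt \<nu> * \<bar>C\<bar>) / (sqrt \<nu> * \<bar>C\<bar> * real (N - 1))"
    using eigen_recurrence_near_symbol [OF \<open>0 < c\<close> \<open>C \<noteq> 0\<close> \<open>0 < \<nu>\<close> rec nontrivial] by blast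
  then have "cmod (\<mu> - mu_plus \<nu> lam dt \<theta>) * cmod (\<mu> - mu_minus \<nu> lam dt \<theta>)
      \<le> 4 * c\<^sup>2 * (c + sqrt \<nu> * \<bar>C\<bar>) / (sqrt \<nu> * \<bar>C\<bar>) / real (N - 1)"
    using mu_plus_mu_minus_product [of \<nu> \<mu> lam dt \<theta>] \<open>0 < \<nu>\<close>
    by (simp add: c_def C_def norm_mult [symmetric])
  moreover have "mu_plus \<nu> lam dt \<theta> \<in> SigmaPS \<nu> lam dt" "mu_minus \<nu> lam dt \<theta> \<in> SigmaPS \<nu> lam dt"
    using \<open>\<theta> \<in> {-pi..pi}\<close> by (auto simp: SigmaPS_def)
  ultimately show "\<exists>\<sigma>\<in>SigmaPS \<nu> lam dt. (cmod (\<mu> - \<sigma>))\<^sup>2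
      \<le> 4 * c\<^sup>2 * (c + sqrt \<nu> * \<bar>C\<bar>) / (sqrt \<nu> * \<bar>C\<bar>) / real (N - 1)"
    using sq_le_or_sq_le_of_mult_le [OF norm_ge_zero norm_ge_zero] by blast
qed

lemma eig_count_outside_eq_0:
  assumes "\<And>z. poly (char_poly (map_mat complex_of_real A)) z = 0 \<Longrightarrow> z \<in> U"
  shows "eig_count_outside A U = 0"
proof -
  have "{z. poly (char_poly (map_mat complex_of_real A)) z = 0 \<and> z \<notin> U} = {}"
    using assms by blast
  then show ?thesis
    unfolding eig_count_outside_def Let_def by (simp only: sum.empty)
qed

lemma TPS_eig_count_outside_eventually_0:
  assumes "0 < \<nu>" "0 < dt" "0 < lam" "open U" "SigmaPS \<nu> lam dt \<subseteq> U"
  shows "eventually (\<lambda>N. eig_count_outside (TPS \<nu> lam dt N) U = 0) sequentially"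
proof -
  obtain \<epsilon> where "0 < \<epsilon>" and balls: "\<And>\<sigma>. \<sigma> \<in> SigmaPS \<nu> lam dt \<Longrightarrow> ball \<sigma> \<epsilon> \<subseteq> U"
    using compact_subset_open_imp_ball_epsilon_subset [OF compact_SigmaPS] assms(4,5)
    by (metis UN_subset_iff)
  obtain K where near: "\<And>N \<mu>. poly (char_poly (map_mat complex_of_real (TPS \<nu> lam dt N))) \<mu> = 0 \<Longrightarrow>
      \<exists>\<sigma>\<in>SigmaPS \<nu> lam dt. (cmod (\<mu> - \<sigma>))\<^sup>2 \<le> K / real (N - 1)"
    using TPS_eigenvalues_near_SigmaPS [OF assms(1-3)] by blast
  have "(\<lambda>N. K / real (N - 1)) \<longlonglongrightarrow> 0"
    using lim_const_over_n [of K] filterlim_sequentially_Suc [of "\<lambda>N. K / real (N - 1)"] by simp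
  then have "eventually (\<lambda>N. K / real (N - 1) < \<epsilon>\<^sup>2) sequentially"
    using \<open>0 < \<epsilon>\<close> by (simp add: order_tendstoD)
  then show ?thesis
  proof (rule eventually_mono, intro eig_count_outside_eq_0)
    fix N \<mu>
    assume "K / real (N - 1) < \<epsilon>\<^sup>2" "poly (char_poly (map_mat complex_of_real (TPS \<nu> lam dt N))) \<mu> = 0"
    with near obtain \<sigma> where "\<sigma> \<in> SigmaPS \<nu> lam dt" "(cmod (\<mu> - \<sigma>))\<^sup>2 < \<epsilon>\<^sup>2"
      by fastforce
    with \<open>0 < \<epsilon>\<close> have "\<mu> \<in> ball \<sigma> \<epsilon>"
      by (simp add: dist_norm norm_minus_commute power_less_imp_less_base)
    with balls \<open>\<sigma> \<in> SigmaPS \<nu> lam dt\<close> show "\<mu> \<in> U"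
      by blast
  qed
qed

theorem mainTheorem3:
  fixes \<nu> dt lam :: real
  assumes "\<nu> > 0" and "dt > 0" and "lam > 0"
  shows "\<forall>U :: complex set. open U \<and> SigmaPS \<nu> lam dt \<subseteq> U \<longrightarrow>
           (\<lambda>N. real (eig_count_outside (TPS \<nu> lam dt N) U)) \<in> o(\<lambda>N. real N)"
proof (intro allI impI)
  fix U :: "complex set"
  assume "open U \<and> SigmaPS \<nu> lam dt \<subseteq> U"
  with assms have "eventually (\<lambda>N. eig_count_outside (TPS \<nu> lam dt N) U = 0) sequentially"
    by (intro TPS_eig_count_outside_eventually_0) auto
  then show "(\<lambda>N. real (eig_count_outside (TPS \<nu> lam dt N) U)) \<in> o(\<lambda>N. real N)"
    by (intro landau_o.smallI) (auto elim: eventually_mono)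
qed

end
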